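(* Let $n\ge 3$ and $d=\lfloor n/2\rfloor$. For $x\in Gr^{>0}(2,n)$ with spanning matrix $X$ having all $\Delta_{i,j}(X)>0$ ($i<j$), define $L(x)=D_d/D_1$. Then (1) $L(x)\le E(x)$, and (2) for the cyclic matrix $C$, $E([C])=L([C])=\sin(d\pi/n)/\sin(\pi/n)$.
   Context: For a real $2\times n$ matrix $X$ and $1\le i<j\le n$, $\Delta_{i,j}(X)$ is the determinant of the $2\times2$ submatrix of columns $i,j$. $Gr^{>0}(2,n)$ is the set of 2-dimensional subspaces of $\mathbb{R}^n$ having a spanning $2\times n$ matrix with all $\Delta_{i,j}>0$ ($i<j$); $E(x)=\max_{i<j}\Delta_{i,j}(X)/\min_{i<j}\Delta_{i,j}(X)$. Let $\sigma$ act on strictly increasing pairs by $\sigma(i,j)=(i+1,j+1)$ if $j<n$ and $\sigma(i,n)=(1,i+1)$; $O_k=\{\sigma^m(1,k+1):m=0,\dots,n-1\}$ and $D_k=\left(\prod_{m=0}^{n-1}\Delta_{\sigma^m(1,k+1)}(X)\right)^{1/n}$ for $k\in\{1,\dots,n-1\}$ (the ratio $D_d/D_1$ does not depend on the choice of $X$). The cyclic matrix $C$ has $m$-th column $(\cos((m-1)\pi/n),\sin((m-1)\pi/n))^T$. *)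

theory Defs
  imports Complex_Main
begin

text \<open>A real 2 x n matrix X is represented by its two rows r1 r2 :: nat => real;
  column m (1 <= m <= n) is (r1 m, r2 m). Entries outside 1..n are irrelevant.\<close>

definition Delta :: "(nat \<Rightarrow> real) \<Rightarrow> (nat \<Rightarrow> real) \<Rightarrow> nat \<times> nat \<Rightarrow> real" where
  "Delta r1 r2 p = r1 (fst p) * r2 (snd p) - r1 (snd p) * r2 (fst p)"

definition pairs :: "nat \<Rightarrow> (nat \<times> nat) set" where
  "pairs n = {(i, j). 1 \<le> i \<and> i < j \<and> j \<le> n}"

definition totally_pos :: "nat \<Rightarrow> (nat \<Rightarrow> real) \<Rightarrow> (nat \<Rightarrow> real) \<Rightarrow> bool" where
  "totally_pos n r1 r2 = (\<forall>p \<in> pairs n. Delta r1 r2 p > 0)"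

definition Eratio :: "nat \<Rightarrow> (nat \<Rightarrow> real) \<Rightarrow> (nat \<Rightarrow> real) \<Rightarrow> real" where
  "Eratio n r1 r2 = Max (Delta r1 r2 ` pairs n) / Min (Delta r1 r2 ` pairs n)"

definition sigma :: "nat \<Rightarrow> nat \<times> nat \<Rightarrow> nat \<times> nat" where
  "sigma n p = (if snd p < n then (fst p + 1, snd p + 1) else (1, fst p + 1))"

definition Dmean :: "nat \<Rightarrow> (nat \<Rightarrow> real) \<Rightarrow> (nat \<Rightarrow> real) \<Rightarrow> nat \<Rightarrow> real" where
  "Dmean n r1 r2 k = root n (\<Prod>m<n. Delta r1 r2 ((sigma n ^^ m) (1, k + 1)))"

definition Lratio :: "nat \<Rightarrow> (nat \<Rightarrow> real) \<Rightarrow> (nat \<Rightarrow> real) \<Rightarrow> real" where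
  "Lratio n r1 r2 = Dmean n r1 r2 (n div 2) / Dmean n r1 r2 1"

definition cyc1 :: "nat \<Rightarrow> nat \<Rightarrow> real" where
  "cyc1 n m = cos ((real m - 1) * pi / real n)"
definition cyc2 :: "nat \<Rightarrow> nat \<Rightarrow> real" where
  "cyc2 n m = sin ((real m - 1) * pi / real n)"

end

theory Submission
  imports Defs
begin

text \<open>Every factor of the product defining \<open>D\<^sub>k\<close> is a Pluecker coordinate, so the geometric
  mean \<open>D\<^sub>k\<close> lies between the smallest and the largest coordinate; hence \<open>D\<^sub>d / D\<^sub>1\<close> is at
  most \<open>max/min\<close>. For the cyclic matrix, \<open>\<Delta>\<^sub>i\<^sub>,\<^sub>j(C) = sin ((j - i) \<pi> / n)\<close> is constant on
  the orbits of \<open>\<sigma>\<close>, so \<open>D\<^sub>k = sin (k \<pi> / n)\<close>; and as \<open>sin (k \<pi> / n) = sin ((n - k) \<pi> / n)\<close>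
  with \<open>sin\<close> increasing on \<open>[0, \<pi>/2]\<close>, the extreme coordinates are \<open>sin (\<pi>/n)\<close> and
  \<open>sin (d \<pi>/n)\<close>.\<close>

lemma finite_pairs: "finite (pairs n)"
  by (rule finite_subset[of _ "{1..n} \<times> {1..n}"]) (auto simp: pairs_def)

lemma sigma_in_pairs: "p \<in> pairs n \<Longrightarrow> sigma n p \<in> pairs n"
  by (cases p) (auto simp: pairs_def sigma_def)

lemma funpow_sigma_in_pairs: "p \<in> pairs n \<Longrightarrow> (sigma n ^^ m) p \<in> pairs n"
  by (induction m) (auto intro: sigma_in_pairs)

lemma start_pair_in_pairs: "1 \<le> k \<Longrightarrow> k < n \<Longrightarrow> (1, k + 1) \<in> pairs n"
  by (auto simp: pairs_def)

lemma root_prod_between: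
  fixes f :: "'a \<Rightarrow> real"
  assumes "finite A" "card A = n" "n > 0" "0 \<le> a"
    and between: "\<And>x. x \<in> A \<Longrightarrow> a \<le> f x \<and> f x \<le> b"
  shows "a \<le> root n (\<Prod>x\<in>A. f x) \<and> root n (\<Prod>x\<in>A. f x) \<le> b"
proof -
  have "a ^ n \<le> (\<Prod>x\<in>A. f x)"
    using prod_mono[of A "\<lambda>_. a" f] between assms by auto
  moreover have "(\<Prod>x\<in>A. f x) \<le> b ^ n"
    using prod_mono[of A f "\<lambda>_. b"] between assms by force
  moreover have "0 \<le> b"
    using between \<open>0 \<le> a\<close> \<open>card A = n\<close> \<open>n > 0\<close> by (metis card_gt_0_iff ex_in_conv order_trans)
  ultimately show ?thesis
    using \<open>n > 0\<close> \<open>0 \<le> a\<close> by (metis real_root_le_iff real_root_power_cancel)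
qed

lemma Min_Delta_pos:
  assumes "totally_pos n r1 r2" "n \<ge> 2"
  shows "Min (Delta r1 r2 ` pairs n) > 0"
proof -
  have "pairs n \<noteq> {}" using start_pair_in_pairs[of 1 n] assms(2) by auto
  then show ?thesis
    using assms(1) finite_pairs by (simp add: totally_pos_def Min_gr_iff)
qed

lemma Dmean_between_Min_Max:
  assumes pos: "totally_pos n r1 r2" and "1 \<le> k" "k < n"
  shows "Min (Delta r1 r2 ` pairs n) \<le> Dmean n r1 r2 k
       \<and> Dmean n r1 r2 k \<le> Max (Delta r1 r2 ` pairs n)"
proof -
  let ?S = "Delta r1 r2 ` pairs n"
  have orbit: "(sigma n ^^ m) (1, k + 1) \<in> pairs n" for m
    using funpow_sigma_in_pairs start_pair_in_pairs assms by blast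
  have "Min ?S > 0"
    using Min_Delta_pos[OF pos] \<open>k < n\<close> \<open>1 \<le> k\<close> by simp
  then show ?thesis
    unfolding Dmean_def using finite_pairs orbit \<open>k < n\<close>
    by (intro root_prod_between) auto
qed

lemma Lratio_le_Eratio:
  assumes pos: "totally_pos n r1 r2" and "n \<ge> 2"
  shows "Lratio n r1 r2 \<le> Eratio n r1 r2"
proof -
  let ?S = "Delta r1 r2 ` pairs n"
  have "1 \<le> n div 2" "n div 2 < n" "1 < n" using \<open>n \<ge> 2\<close> by auto
  then have "Min ?S \<le> Dmean n r1 r2 (n div 2)" "Dmean n r1 r2 (n div 2) \<le> Max ?S"
    "Min ?S \<le> Dmean n r1 r2 1"
    using Dmean_between_Min_Max[OF pos] by auto
  moreover have "Min ?S > 0" using Min_Delta_pos[OF pos \<open>n \<ge> 2\<close>] .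
  ultimately show ?thesis
    unfolding Lratio_def Eratio_def by (intro frac_le) auto
qed

lemma sin_reflect_over_n:
  fixes n k :: nat
  assumes "k \<le> n" "n > 0"
  shows "sin (real (n - k) * pi / real n) = sin (real k * pi / real n)"
proof -
  have "real (n - k) * pi / real n = pi - real k * pi / real n"
    using assms by (simp add: of_nat_diff field_simps)
  then show ?thesis by simp
qed

lemma sin_between_on_first_quadrant:
  fixes a x h :: real
  assumes "0 < a" "a \<le> x" "x \<le> h" "h \<le> pi / 2"
  shows "sin a \<le> sin x \<and> sin x \<le> sin h \<and> 0 < sin x"
proof -
  have "sin a \<le> sin x" by (rule sin_monotone_2pi_le) (use assms in linarith)+
  moreover have "sin x \<le> sin h" by (rule sin_monotone_2pi_le) (use assms in linarith)+
  moreover have "0 < sin x" by (rule sin_gt_zero) (use assms pi_gt_zero in linarith)+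
  ultimately show ?thesis by blast
qed

lemma sin_multiple_between_half:
  fixes n k :: nat
  assumes "1 \<le> k" "k \<le> n div 2"
  shows "sin (pi / real n) \<le> sin (real k * pi / real n)
       \<and> sin (real k * pi / real n) \<le> sin (real (n div 2) * pi / real n)
       \<and> 0 < sin (real k * pi / real n)"
proof (rule sin_between_on_first_quadrant)
  have "real n > 0" using assms by simp
  then show "0 < pi / real n" by simp
  show "pi / real n \<le> real k * pi / real n"
    "real k * pi / real n \<le> real (n div 2) * pi / real n"
    using assms \<open>real n > 0\<close> by (auto intro!: divide_right_mono)
  have "2 * real (n div 2) \<le> real n" by linarith
  then show "real (n div 2) * pi / real n \<le> pi / 2"
    using \<open>real n > 0\<close> by (simp add: field_simps)
qed

lemma sin_multiple_between:
  fixes n k :: nat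
  assumes "1 \<le> k" "k < n"
  shows "sin (pi / real n) \<le> sin (real k * pi / real n)
       \<and> sin (real k * pi / real n) \<le> sin (real (n div 2) * pi / real n)
       \<and> 0 < sin (real k * pi / real n)"
proof (cases "k \<le> n div 2")
  case True
  then show ?thesis using sin_multiple_between_half assms by blast
next
  case False
  then have "1 \<le> n - k" "n - k \<le> n div 2" using assms by auto
  then show ?thesis
    using sin_multiple_between_half[of "n - k" n] sin_reflect_over_n[of k n] assms by simp
qed

lemma Delta_cyc: "Delta (cyc1 n) (cyc2 n) (i, j) = sin ((real j - real i) * pi / real n)"
proof -
  have "(real j - real i) * pi / real n = (real j - 1) * pi / real n - (real i - 1) * pi / real n"
    by (simp add: diff_divide_distrib[symmetric] algebra_simps)
  then show ?thesis by (simp add: Delta_def cyc1_def cyc2_def sin_diff mult.commute)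
qed

lemma Delta_cyc_pair:
  "p \<in> pairs n \<Longrightarrow> Delta (cyc1 n) (cyc2 n) p = sin (real (snd p - fst p) * pi / real n)"
  by (cases p) (auto simp: pairs_def Delta_cyc of_nat_diff)

lemma Delta_cyc_sigma:
  assumes "p \<in> pairs n"
  shows "Delta (cyc1 n) (cyc2 n) (sigma n p) = Delta (cyc1 n) (cyc2 n) p"
proof (cases p)
  case (Pair i j)
  show ?thesis
  proof (cases "j < n")
    case True
    then show ?thesis using Pair by (simp add: sigma_def Delta_cyc)
  next
    case False
    then have "j = n" "i \<le> n" using assms Pair by (auto simp: pairs_def)
    then show ?thesis
      using Pair sin_reflect_over_n[of i n] assms
      by (simp add: sigma_def Delta_cyc pairs_def of_nat_diff)
  qed
qed

lemma Delta_cyc_funpow_sigma: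
  "p \<in> pairs n \<Longrightarrow> Delta (cyc1 n) (cyc2 n) ((sigma n ^^ m) p) = Delta (cyc1 n) (cyc2 n) p"
  by (induction m) (auto simp: Delta_cyc_sigma funpow_sigma_in_pairs)

lemma Dmean_cyc:
  assumes "1 \<le> k" "k < n"
  shows "Dmean n (cyc1 n) (cyc2 n) k = sin (real k * pi / real n)"
proof -
  have start: "(1, k + 1) \<in> pairs n" using start_pair_in_pairs assms .
  have "(\<Prod>m<n. Delta (cyc1 n) (cyc2 n) ((sigma n ^^ m) (1, k + 1))) = sin (real k * pi / real n) ^ n"
    using Delta_cyc_funpow_sigma[OF start] Delta_cyc_pair[OF start] by simp
  moreover have "0 < sin (real k * pi / real n)" using sin_multiple_between assms by blast
  ultimately show ?thesis
    using assms by (simp add: Dmean_def real_root_power_cancel)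
qed

lemma Eratio_cyc:
  assumes "n \<ge> 2"
  shows "Eratio n (cyc1 n) (cyc2 n) = sin (real (n div 2) * pi / real n) / sin (pi / real n)"
proof -
  let ?S = "Delta (cyc1 n) (cyc2 n) ` pairs n"
  have bounds: "sin (pi / real n) \<le> x \<and> x \<le> sin (real (n div 2) * pi / real n)"
    if "x \<in> ?S" for x
  proof -
    obtain p where p: "p \<in> pairs n" "x = Delta (cyc1 n) (cyc2 n) p" using \<open>x \<in> ?S\<close> by blast
    then have "1 \<le> snd p - fst p" "snd p - fst p < n" by (auto simp: pairs_def)
    then show ?thesis
      using sin_multiple_between[of "snd p - fst p" n] p Delta_cyc_pair by auto
  qed
  have attained: "sin (real k * pi / real n) \<in> ?S" if "1 \<le> k" "k < n" for k
    using Delta_cyc_pair[OF start_pair_in_pairs[OF that]] start_pair_in_pairs[OF that]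
    by (intro image_eqI) auto
  have "Max ?S = sin (real (n div 2) * pi / real n)"
    using attained[of "n div 2"] assms bounds finite_pairs by (intro Max_eqI) auto
  moreover have "Min ?S = sin (pi / real n)"
    using attained[of 1] assms bounds finite_pairs by (intro Min_eqI) auto
  ultimately show ?thesis by (simp add: Eratio_def)
qed

theorem mainTheorem8:
  fixes n :: nat
  assumes "n \<ge> 3"
  shows "(\<forall>r1 r2. totally_pos n r1 r2 \<longrightarrow> Lratio n r1 r2 \<le> Eratio n r1 r2)
       \<and> Eratio n (cyc1 n) (cyc2 n) = sin (real (n div 2) * pi / real n) / sin (pi / real n)
       \<and> Lratio n (cyc1 n) (cyc2 n) = sin (real (n div 2) * pi / real n) / sin (pi / real n)"
proof -
  have "n \<ge> 2" using assms by simp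
  moreover have "Lratio n (cyc1 n) (cyc2 n) = sin (real (n div 2) * pi / real n) / sin (pi / real n)"
    using Dmean_cyc[of "n div 2" n] Dmean_cyc[of 1 n] assms by (simp add: Lratio_def)
  ultimately show ?thesis using Lratio_le_Eratio Eratio_cyc by blast
qed


end
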